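(* Let $m$ be an even positive integer, let $q,k$ be positive integers, $n=q(k-1)+1$, and ${\bf h}\in\mathbb{R}^{qm(k-1)+1}$. Let $\mathcal{H}_m$ be the $m^{\rm th}$-order $n$-dimensional Hankel tensor and $\mathcal{H}_{qm}$ the $(qm)^{\rm th}$-order $k$-dimensional Hankel tensor, both generated by ${\bf h}$ (i.e. entries $h_{i_1+i_2+\cdots}$, indices starting at $0$). Define $c_1=\min_{0\ne{\bf y}\in\mathbb{R}^k}\|{\bf y}^{\ast q}\|_m^m/\|{\bf y}\|_{qm}^{qm}$ and $c_2=\max_{0\ne{\bf y}\in\mathbb{R}^k}\|{\bf y}^{\ast q}\|_m^m/\|{\bf y}\|_{qm}^{qm}$ (positive constants depending on $m,n,q$). Then $\lambda_{\min}(\mathcal{H}_{qm})\ge c_1\,\lambda_{\min}(\mathcal{H}_m)$ if $\mathcal{H}_{qm}$ is positive semi-definite, and $\lambda_{\min}(\mathcal{H}_{qm})\ge c_2\,\lambda_{\min}(\mathcal{H}_m)$ otherwise; and $\lambda_{\max}(\mathcal{H}_{qm})\le c_1\,\lambda_{\max}(\mathcal{H}_m)$ if $\mathcal{H}_{qm}$ is negative semi-definite, and $\lambda_{\max}(\mathcal{H}_{qm})\le c_2\,\lambda_{\max}(\mathcal{H}_m)$ otherwise.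
   Context: For ${\bf u}\in\mathbb{R}^{n_1}$, ${\bf v}\in\mathbb{R}^{n_2}$ (indexed from $0$), the convolution ${\bf u}\ast{\bf v}\in\mathbb{R}^{n_1+n_2-1}$ has entries $({\bf u}\ast{\bf v})_j=\sum_{i=0}^j u_iv_{j-i}$ (with $u_i=0$ for $i\ge n_1$, $v_i=0$ for $i\ge n_2$); ${\bf y}^{\ast q}={\bf y}\ast\cdots\ast{\bf y}$ ($q$ factors), so ${\bf y}^{\ast q}\in\mathbb{R}^{q(k-1)+1}=\mathbb{R}^n$ for ${\bf y}\in\mathbb{R}^k$. $\|\cdot\|_p$ is the $\ell_p$-norm. For a real $m^{\rm th}$-order $n$-dimensional tensor $\mathcal{T}$, $(\mathcal{T}{\bf x}^{m-1})_i=\sum_{i_2,\dots,i_m}\mathcal{T}_{i i_2\dots i_m}x_{i_2}\cdots x_{i_m}$; a real $\lambda$ is an H-eigenvalue if there is nonzero ${\bf x}\in\mathbb{R}^n$ with $\mathcal{T}{\bf x}^{m-1}=\lambda{\bf x}^{[m-1]}$, where ${\bf x}^{[m-1]}=(x_1^{m-1},\dots,x_n^{m-1})^\top$. $\lambda_{\min}(\cdot)$, $\lambda_{\max}(\cdot)$ denote the smallest and largest H-eigenvalue. An even-order tensor is positive (negative) semi-definite if $\mathcal{T}{\bf x}^m\ge0$ ($\le 0$) for all real ${\bf x}$, where $\mathcal{T}{\bf x}^m=\sum\mathcal{T}_{i_1\dots i_m}x_{i_1}\cdots x_{i_m}$. *)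

theory Defs
  imports Complex_Main
begin

text \<open>Vectors in R^n are functions nat => real; only indices 0..n-1 matter.
  A real m-th order n-dimensional tensor is a function from index lists
  (of length m, entries in 0..n-1) to real.\<close>

definition index_lists :: "nat \<Rightarrow> nat \<Rightarrow> nat list set" where
  "index_lists len n = {is. length is = len \<and> set is \<subseteq> {..<n}}"

definition tensor_apply :: "nat \<Rightarrow> nat \<Rightarrow> (nat list \<Rightarrow> real) \<Rightarrow> (nat \<Rightarrow> real) \<Rightarrow> nat \<Rightarrow> real" where
  "tensor_apply m n T x i = (\<Sum>is\<in>index_lists (m - 1) n. T (i # is) * prod_list (map x is))"

definition tensor_form :: "nat \<Rightarrow> nat \<Rightarrow> (nat list \<Rightarrow> real) \<Rightarrow> (nat \<Rightarrow> real) \<Rightarrow> real" where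
  "tensor_form m n T x = (\<Sum>is\<in>index_lists m n. T is * prod_list (map x is))"

definition is_H_eigenvalue :: "nat \<Rightarrow> nat \<Rightarrow> (nat list \<Rightarrow> real) \<Rightarrow> real \<Rightarrow> bool" where
  "is_H_eigenvalue m n T lam \<longleftrightarrow>
     (\<exists>x::nat \<Rightarrow> real. (\<exists>i<n. x i \<noteq> 0) \<and>
        (\<forall>i<n. tensor_apply m n T x i = lam * x i ^ (m - 1)))"

definition lambda_min :: "nat \<Rightarrow> nat \<Rightarrow> (nat list \<Rightarrow> real) \<Rightarrow> real" where
  "lambda_min m n T = Inf {lam. is_H_eigenvalue m n T lam}"

definition lambda_max :: "nat \<Rightarrow> nat \<Rightarrow> (nat list \<Rightarrow> real) \<Rightarrow> real" where
  "lambda_max m n T = Sup {lam. is_H_eigenvalue m n T lam}"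

definition psd_tensor :: "nat \<Rightarrow> nat \<Rightarrow> (nat list \<Rightarrow> real) \<Rightarrow> bool" where
  "psd_tensor m n T \<longleftrightarrow> (\<forall>x. tensor_form m n T x \<ge> 0)"

definition nsd_tensor :: "nat \<Rightarrow> nat \<Rightarrow> (nat list \<Rightarrow> real) \<Rightarrow> bool" where
  "nsd_tensor m n T \<longleftrightarrow> (\<forall>x. tensor_form m n T x \<le> 0)"

definition hankel_tensor :: "(nat \<Rightarrow> real) \<Rightarrow> nat list \<Rightarrow> real" where
  "hankel_tensor h is = h (sum_list is)"

definition conv :: "(nat \<Rightarrow> real) \<Rightarrow> (nat \<Rightarrow> real) \<Rightarrow> nat \<Rightarrow> real" where
  "conv u v j = (\<Sum>i\<le>j. u i * v (j - i))"

fun conv_pow :: "(nat \<Rightarrow> real) \<Rightarrow> nat \<Rightarrow> nat \<Rightarrow> real" where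
  "conv_pow y 0 = (\<lambda>j. if j = 0 then 1 else 0)"
| "conv_pow y (Suc q) = conv y (conv_pow y q)"

definition trunc_vec :: "nat \<Rightarrow> (nat \<Rightarrow> real) \<Rightarrow> nat \<Rightarrow> real" where
  "trunc_vec k y = (\<lambda>i. if i < k then y i else 0)"

definition pnorm_pow :: "nat \<Rightarrow> nat \<Rightarrow> (nat \<Rightarrow> real) \<Rightarrow> real" where
  "pnorm_pow d p v = (\<Sum>i<d. \<bar>v i\<bar> ^ p)"

definition conv_ratio :: "nat \<Rightarrow> nat \<Rightarrow> nat \<Rightarrow> (nat \<Rightarrow> real) \<Rightarrow> real" where
  "conv_ratio m q k y =
     pnorm_pow (q * (k - 1) + 1) m (conv_pow (trunc_vec k y) q) / pnorm_pow k (q * m) y"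

definition nonzero_vec :: "nat \<Rightarrow> (nat \<Rightarrow> real) \<Rightarrow> bool" where
  "nonzero_vec k y \<longleftrightarrow> (\<exists>i<k. y i \<noteq> 0)"

definition c1_const :: "nat \<Rightarrow> nat \<Rightarrow> nat \<Rightarrow> real" where
  "c1_const m q k = Inf {conv_ratio m q k y | y. nonzero_vec k y}"

definition c2_const :: "nat \<Rightarrow> nat \<Rightarrow> nat \<Rightarrow> real" where
  "c2_const m q k = Sup {conv_ratio m q k y | y. nonzero_vec k y}"

end

theory Submission
  imports Defs "HOL-Analysis.Analysis" "HOL-Computational_Algebra.Polynomial"
begin

text \<open>Write P_x = \<Sum>_j x_j X^j and L_h for the linear functional on polynomials sending
  X^s to h_s. The Hankel form is then H_p x^p = L_h(P_x^p), and since (P_y)^q = P_(y^*q) one gets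
  H_qm y^qm = H_m (y^*q)^m. For even order the smallest H-eigenvalue exists and is the minimum
  of the Rayleigh quotient H x^p / ||x||_p^p (the Lagrange condition at a minimiser on the unit
  sphere is the eigenvalue equation). Evaluating at an eigenvector y of lambda_min(H_qm):
  lambda_min(H_qm) ||y||^qm = H_m (y^*q)^m \<ge> lambda_min(H_m) r(y) ||y||^qm with c1 \<le> r(y) \<le> c2,
  so lambda_min(H_qm) \<ge> c1 lambda_min(H_m) when lambda_min(H_m) \<ge> 0 and
  lambda_min(H_qm) \<ge> c2 lambda_min(H_m) when lambda_min(H_m) < 0. If H_qm is not positive
  semi-definite then neither is H_m, so the second case applies; if it is, lambda_min(H_qm) \<ge> 0
  makes the first bound trivial when lambda_min(H_m) < 0. The bounds on lambda_max follow by
  replacing h with -h.\<close>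

section \<open>Hankel forms as a linear functional on polynomials\<close>

definition hankel_functional :: "(nat \<Rightarrow> real) \<Rightarrow> real poly \<Rightarrow> real" where
  "hankel_functional h Q = (\<Sum>s\<le>degree Q. h s * coeff Q s)"

definition poly_of_vec :: "nat \<Rightarrow> (nat \<Rightarrow> real) \<Rightarrow> real poly" where
  "poly_of_vec d x = (\<Sum>j<d. monom (x j) j)"

lemma hankel_functional_eq:
  "degree Q \<le> N \<Longrightarrow> hankel_functional h Q = (\<Sum>s\<le>N. h s * coeff Q s)"
  unfolding hankel_functional_def
  by (rule sum.mono_neutral_left) (auto simp: coeff_eq_0)

lemma hankel_functional_0 [simp]: "hankel_functional h 0 = 0"
  by (simp add: hankel_functional_def)

lemma hankel_functional_add:
  "hankel_functional h (A + B) = hankel_functional h A + hankel_functional h B"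
proof -
  let ?N = "max (degree A) (degree B)"
  have "degree (A + B) \<le> ?N" by (simp add: degree_add_le)
  then show ?thesis
    by (simp add: hankel_functional_eq[of _ ?N] sum.distrib distrib_left)
qed

lemma hankel_functional_smult:
  "hankel_functional h (smult c A) = c * hankel_functional h A"
  using hankel_functional_eq[of "smult c A" "degree A" h]
  by (simp add: sum_distrib_left hankel_functional_def mult_ac)

lemma hankel_functional_sum:
  "hankel_functional h (\<Sum>i\<in>A. f i) = (\<Sum>i\<in>A. hankel_functional h (f i))"
  by (induction A rule: infinite_finite_induct) (auto simp: hankel_functional_add)

lemma hankel_functional_monom_mult:
  "hankel_functional h (monom c i * Q) = c * hankel_functional (\<lambda>s. h (i + s)) Q"
proof -
  let ?D = "degree Q"
  let ?f = "\<lambda>s. h s * (if s < i then 0 else c * coeff Q (s - i))"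
  have "degree (monom c i * Q) \<le> i + ?D"
    by (rule order_trans[OF degree_mult_le]) (simp add: degree_monom_le)
  then have "hankel_functional h (monom c i * Q) = (\<Sum>s\<le>i + ?D. ?f s)"
    by (simp add: hankel_functional_eq coeff_monom_mult)
  also have "\<dots> = (\<Sum>s\<in>(+) i ` {..?D}. ?f s)"
  proof (rule sum.mono_neutral_right)
    have "s \<in> (+) i ` {..?D}" if "i \<le> s" "s \<le> i + ?D" for s
      using that by (intro image_eqI[of _ _ "s - i"]) auto
    then show "\<forall>s\<in>{..i + ?D} - (+) i ` {..?D}. ?f s = 0"
      by force
  qed auto
  also have "\<dots> = (\<Sum>t\<le>?D. h (i + t) * (c * coeff Q t))"
    by (subst sum.reindex) auto
  also have "\<dots> = c * hankel_functional (\<lambda>s. h (i + s)) Q"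
    by (simp add: hankel_functional_def sum_distrib_left mult_ac)
  finally show ?thesis .
qed

lemma finite_index_lists: "finite (index_lists p d)"
proof -
  have "index_lists p d = {xs. set xs \<subseteq> {..<d} \<and> length xs = p}"
    by (auto simp: index_lists_def)
  then show ?thesis
    using finite_lists_length_eq[of "{..<d}" p] by simp
qed

lemma sum_index_lists_Suc:
  "(\<Sum>is\<in>index_lists (Suc p) d. f is) = (\<Sum>i<d. \<Sum>is\<in>index_lists p d. f (i # is))"
proof -
  have lists: "index_lists (Suc p) d = (\<lambda>(i, is). i # is) ` ({..<d} \<times> index_lists p d)"
    unfolding index_lists_def by (auto simp: length_Suc_conv image_iff)
  have "inj_on (\<lambda>(i, is). i # is) ({..<d} \<times> index_lists p d)"
    by (auto simp: inj_on_def)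
  then show ?thesis
    unfolding lists by (simp add: sum.reindex sum.cartesian_product finite_index_lists split_def)
qed

lemma tensor_form_hankel_Suc:
  "tensor_form (Suc p) d (hankel_tensor h) x =
     (\<Sum>i<d. x i * tensor_form p d (hankel_tensor (\<lambda>s. h (i + s))) x)"
  unfolding tensor_form_def sum_index_lists_Suc
  by (simp add: hankel_tensor_def sum_distrib_left mult_ac)

lemma tensor_form_hankel:
  "tensor_form p d (hankel_tensor h) x = hankel_functional h (poly_of_vec d x ^ p)"
proof (induction p arbitrary: h)
  case 0
  have "index_lists 0 d = {[]}"
    by (auto simp: index_lists_def)
  then show ?case
    by (simp add: tensor_form_def hankel_tensor_def hankel_functional_def)
next
  case (Suc p)
  have "tensor_form (Suc p) d (hankel_tensor h) x =
      (\<Sum>i<d. x i * hankel_functional (\<lambda>s. h (i + s)) (poly_of_vec d x ^ p))"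
    by (simp add: tensor_form_hankel_Suc Suc)
  also have "\<dots> = (\<Sum>i<d. hankel_functional h (monom (x i) i * poly_of_vec d x ^ p))"
    by (simp add: hankel_functional_monom_mult)
  also have "\<dots> = hankel_functional h (poly_of_vec d x ^ Suc p)"
    by (simp add: hankel_functional_sum[symmetric] poly_of_vec_def sum_distrib_right)
  finally show ?case .
qed

lemma tensor_apply_hankel:
  assumes "0 < p"
  shows "tensor_apply p d (hankel_tensor h) x i =
           hankel_functional h (monom 1 i * poly_of_vec d x ^ (p - 1))"
proof -
  have "tensor_apply p d (hankel_tensor h) x i =
      tensor_form (p - 1) d (hankel_tensor (\<lambda>s. h (i + s))) x"
    by (simp add: tensor_apply_def tensor_form_def hankel_tensor_def)
  then show ?thesis
    by (simp add: tensor_form_hankel hankel_functional_monom_mult)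
qed

lemma tensor_form_eq_sum_tensor_apply:
  assumes "0 < p"
  shows "tensor_form p d T x = (\<Sum>i<d. x i * tensor_apply p d T x i)"
proof -
  obtain p' where p: "p = Suc p'"
    using assms by (cases p) auto
  show ?thesis
    unfolding p tensor_form_def tensor_apply_def sum_index_lists_Suc
    by (simp add: sum_distrib_left mult_ac)
qed

section \<open>The convolution identity\<close>

lemma coeff_poly_of_vec: "coeff (poly_of_vec d x) = trunc_vec d x"
  by (simp add: fun_eq_iff poly_of_vec_def coeff_sum coeff_monom trunc_vec_def)

lemma degree_poly_of_vec: "degree (poly_of_vec d x) \<le> d - 1"
  by (rule degree_le) (auto simp: coeff_poly_of_vec trunc_vec_def)

lemma poly_of_vec_coeff:
  assumes "degree Q < d"
  shows "poly_of_vec d (coeff Q) = Q"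
proof -
  have "{..<d} = {..d - 1}"
    using assms by auto
  then show ?thesis
    using poly_as_sum_of_monoms'[of Q "d - 1"] assms by (simp add: poly_of_vec_def)
qed

lemma conv_coeff: "conv (coeff A) (coeff B) = coeff (A * B)"
  by (simp add: conv_def coeff_mult fun_eq_iff)

lemma conv_pow_coeff: "conv_pow (coeff A) q = coeff (A ^ q)"
proof (induction q)
  case (Suc q)
  then show ?case by (simp add: conv_coeff)
qed (auto simp: fun_eq_iff coeff_1)

lemma tensor_form_hankel_conv_pow:
  assumes "n = q * (k - 1) + 1"
  shows "tensor_form (q * m) k (hankel_tensor h) y =
           tensor_form m n (hankel_tensor h) (conv_pow (trunc_vec k y) q)"
proof -
  have "degree (poly_of_vec k y ^ q) \<le> q * (k - 1)"
    using degree_power_le[of "poly_of_vec k y" q] degree_poly_of_vec[of k y]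
    by (metis le_trans mult.commute mult_le_mono1)
  then have "poly_of_vec n (conv_pow (trunc_vec k y) q) = poly_of_vec k y ^ q"
    using assms by (simp add: coeff_poly_of_vec[symmetric] conv_pow_coeff poly_of_vec_coeff)
  then show ?thesis
    by (simp add: tensor_form_hankel power_mult)
qed

section \<open>The smallest H-eigenvalue of an even-order Hankel tensor\<close>

lemma pnorm_pow_even: "even p \<Longrightarrow> pnorm_pow d p x = (\<Sum>j<d. x j ^ p)"
  by (simp add: pnorm_pow_def power_even_abs)

lemma pnorm_pow_nonneg: "0 \<le> pnorm_pow d p x"
  by (simp add: pnorm_pow_def sum_nonneg)

lemma pnorm_pow_pos:
  assumes "nonzero_vec d x"
  shows "0 < pnorm_pow d p x"
proof -
  obtain i where i: "i < d" "x i \<noteq> 0"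
    using assms by (auto simp: nonzero_vec_def)
  then have "0 < \<bar>x i\<bar> ^ p" by simp
  also have "\<dots> \<le> pnorm_pow d p x"
    unfolding pnorm_pow_def using i by (intro member_le_sum) auto
  finally show ?thesis .
qed

lemma pnorm_pow_eq_0_iff:
  assumes "0 < p"
  shows "pnorm_pow d p x = 0 \<longleftrightarrow> \<not> nonzero_vec d x"
proof
  show "\<not> nonzero_vec d x \<Longrightarrow> pnorm_pow d p x = 0"
    using assms by (simp add: pnorm_pow_def nonzero_vec_def)
qed (metis pnorm_pow_pos less_irrefl)

lemma abs_le_one_if_pnorm_pow_le_one:
  assumes "0 < p" "pnorm_pow d p x \<le> 1" "j < d"
  shows "\<bar>x j\<bar> \<le> 1"
proof -
  have "\<bar>x j\<bar> ^ p \<le> pnorm_pow d p x"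
    unfolding pnorm_pow_def using assms(3) by (intro member_le_sum) auto
  then have "\<bar>x j\<bar> ^ p \<le> 1"
    using assms(2) by linarith
  then show ?thesis
    using assms(1) power_le_one_iff[of "\<bar>x j\<bar>" p] by simp
qed

lemma continuous_on_pnorm_pow: "continuous_on UNIV (pnorm_pow d p)"
  unfolding pnorm_pow_def by (intro continuous_intros continuous_on_product_coordinates)

lemma tensor_form_cong:
  "(\<And>j. j < d \<Longrightarrow> x j = y j) \<Longrightarrow> tensor_form p d T x = tensor_form p d T y"
  unfolding tensor_form_def
  by (rule sum.cong) (auto simp: index_lists_def intro!: arg_cong[where f = prod_list] map_cong)

lemma tensor_form_scale: "tensor_form p d T (\<lambda>j. c * x j) = c ^ p * tensor_form p d T x"
proof -
  have "prod_list (map (\<lambda>j. c * x j) is) = c ^ length is * prod_list (map x is)" for "is"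
    by (induction "is") (auto simp: mult_ac)
  then show ?thesis
    unfolding tensor_form_def sum_distrib_left
    by (intro sum.cong) (auto simp: index_lists_def algebra_simps)
qed

lemma continuous_on_tensor_form: "continuous_on UNIV (tensor_form p d T)"
proof -
  have "continuous_on UNIV (\<lambda>x::nat \<Rightarrow> real. prod_list (map x is))" for "is"
    by (induction "is") (auto intro!: continuous_intros)
  then show ?thesis
    unfolding tensor_form_def by (intro continuous_intros)
qed

definition pnorm_sphere :: "nat \<Rightarrow> nat \<Rightarrow> (nat \<Rightarrow> real) set" where
  "pnorm_sphere p d = {x. (\<forall>j\<ge>d. x j = 0) \<and> pnorm_pow d p x = 1}"

lemma compact_pnorm_sphere:
  assumes "0 < p"
  shows "compact (pnorm_sphere p d)"
proof -
  define B where "B = (\<lambda>j::nat. if j < d then {-1..1::real} else {0})"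
  have "pnorm_sphere p d = Pi UNIV B \<inter> {x. pnorm_pow d p x = 1}"
  proof (intro set_eqI iffI)
    fix x
    assume "x \<in> pnorm_sphere p d"
    then show "x \<in> Pi UNIV B \<inter> {x. pnorm_pow d p x = 1}"
      using abs_le_one_if_pnorm_pow_le_one[OF assms, of d x]
      by (auto simp: pnorm_sphere_def B_def abs_le_iff)
  next
    fix x
    assume "x \<in> Pi UNIV B \<inter> {x. pnorm_pow d p x = 1}"
    then have "x j \<in> B j" "pnorm_pow d p x = 1" for j
      by auto
    moreover have "x j = 0" if "d \<le> j" for j
      using \<open>x j \<in> B j\<close> that by (simp add: B_def)
    ultimately show "x \<in> pnorm_sphere p d"
      by (simp add: pnorm_sphere_def)
  qed
  moreover have "compactin (product_topology (\<lambda>i. euclidean) UNIV) (PiE UNIV B)"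
    by (subst compactin_PiE) (auto simp: B_def)
  then have "compact (Pi UNIV B)"
    by (simp add: euclidean_product_topology PiE_UNIV_domain)
  moreover have "closed {x. pnorm_pow d p x = 1}"
    by (intro closed_Collect_eq continuous_on_pnorm_pow continuous_on_const)
  ultimately show ?thesis
    by (simp add: compact_Int_closed)
qed

lemma unit_vector_in_pnorm_sphere:
  assumes "0 < p" "0 < d"
  shows "(\<lambda>j. if j = 0 then 1 else 0) \<in> pnorm_sphere p d"
proof -
  have "pnorm_pow d p (\<lambda>j. if j = 0 then 1 else 0) = (\<Sum>j<d. if j = 0 then 1 else 0)"
    unfolding pnorm_pow_def using assms(1) by (intro sum.cong) auto
  then show ?thesis
    using assms(2) by (simp add: pnorm_sphere_def)
qed

lemma tensor_form_ge_sphere_minimum: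
  assumes p: "0 < p" and x0: "x0 \<in> pnorm_sphere p d"
    and min: "\<forall>y\<in>pnorm_sphere p d. tensor_form p d T x0 \<le> tensor_form p d T y"
  shows "tensor_form p d T x0 * pnorm_pow d p x \<le> tensor_form p d T x"
proof (cases "nonzero_vec d x")
  case False
  then have "tensor_form p d T x = tensor_form p d T (\<lambda>j. 0 * x j)"
    by (intro tensor_form_cong) (auto simp: nonzero_vec_def)
  then have "tensor_form p d T x = 0"
    using tensor_form_scale[of p d T 0 x] p by (simp add: zero_power)
  moreover have "pnorm_pow d p x = 0"
    using False pnorm_pow_eq_0_iff[OF p] by blast
  ultimately show ?thesis
    by simp
next
  case True
  define s where "s = pnorm_pow d p x"
  define r where "r = root p s"
  have s: "0 < s"
    using True by (simp add: s_def pnorm_pow_pos)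
  then have r: "0 < r" "r ^ p = s"
    using p by (simp_all add: r_def)
  define u where "u = (\<lambda>j. if j < d then x j / r else 0)"
  have "pnorm_pow d p u = (\<Sum>j<d. \<bar>x j\<bar> ^ p / r ^ p)"
    unfolding pnorm_pow_def using r by (intro sum.cong) (auto simp: u_def power_divide)
  also have "\<dots> = 1"
    using r s by (simp add: s_def pnorm_pow_def sum_divide_distrib[symmetric])
  finally have "u \<in> pnorm_sphere p d"
    by (simp add: pnorm_sphere_def u_def)
  then have "tensor_form p d T x0 \<le> tensor_form p d T u"
    using min by blast
  moreover have "tensor_form p d T x = tensor_form p d T (\<lambda>j. r * u j)"
    using r by (intro tensor_form_cong) (auto simp: u_def)
  then have "tensor_form p d T x = s * tensor_form p d T u"
    using r by (simp add: tensor_form_scale)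
  ultimately show ?thesis
    using s by (simp add: s_def mult.commute)
qed

lemma poly_of_vec_add_unit:
  assumes "i < d"
  shows "poly_of_vec d (\<lambda>j. x j + (if j = i then t else 0)) = poly_of_vec d x + smult t (monom 1 i)"
proof -
  have "(\<Sum>j<d. monom (if j = i then t else 0) j) = (\<Sum>j<d. if j = i then monom t i else 0)"
    by (intro sum.cong) auto
  also have "\<dots> = monom t i"
    using assms by simp
  finally show ?thesis
    by (simp add: poly_of_vec_def add_monom[symmetric] sum.distrib smult_monom)
qed

lemma hankel_functional_power_deriv:
  "((\<lambda>t. hankel_functional h (A * (P + smult t M) ^ p)) has_real_derivative
      (of_nat p * hankel_functional h (A * M * P ^ (p - 1)))) (at 0)"
proof (induction p arbitrary: A)
  case 0
  then show ?case by simp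
next
  case (Suc p)
  let ?L = "hankel_functional h"
  have split: "(\<lambda>t. ?L (A * (P + smult t M) ^ Suc p)) =
      (\<lambda>t. ?L ((A * P) * (P + smult t M) ^ p) + t * ?L ((A * M) * (P + smult t M) ^ p))"
  proof
    fix t
    have "A * (P + smult t M) ^ Suc p =
        (A * P) * (P + smult t M) ^ p + smult t ((A * M) * (P + smult t M) ^ p)"
      by (simp add: algebra_simps)
    then show "?L (A * (P + smult t M) ^ Suc p) =
        ?L ((A * P) * (P + smult t M) ^ p) + t * ?L ((A * M) * (P + smult t M) ^ p)"
      by (simp add: hankel_functional_add hankel_functional_smult)
  qed
  have "((\<lambda>t. ?L ((A * P) * (P + smult t M) ^ p) + t * ?L ((A * M) * (P + smult t M) ^ p))
        has_real_derivative (of_nat p * ?L (A * P * M * P ^ (p - 1)) +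
          (1 * ?L ((A * M) * (P + smult 0 M) ^ p) + of_nat p * ?L (A * M * M * P ^ (p - 1)) * 0)))
        (at 0)"
    by (intro DERIV_add DERIV_mult DERIV_ident Suc.IH)
  moreover have "of_nat p * ?L (A * P * M * P ^ (p - 1)) + ?L ((A * M) * P ^ p) =
      of_nat (Suc p) * ?L (A * M * P ^ p)"
  proof (cases p)
    case (Suc p')
    have "A * P * M * P ^ p' = A * M * P ^ Suc p'"
      by (simp add: mult_ac)
    then show ?thesis
      by (simp add: Suc algebra_simps)
  qed simp
  ultimately show ?case
    unfolding split by simp
qed

text \<open>Lagrange condition: g t = H (x0 + t e_i)^p - mu ||x0 + t e_i||_p^p is nonnegative and
  vanishes at t = 0, so g'(0) = 0.\<close>

lemma hankel_minimiser_is_eigenvector: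
  assumes ev: "even p" and p: "0 < p" and i: "i < d"
    and bound: "\<And>x. mu * pnorm_pow d p x \<le> tensor_form p d (hankel_tensor h) x"
    and norm: "pnorm_pow d p x0 = 1" and min: "tensor_form p d (hankel_tensor h) x0 = mu"
  shows "tensor_apply p d (hankel_tensor h) x0 i = mu * x0 i ^ (p - 1)"
proof -
  let ?P = "poly_of_vec d x0"
  let ?M = "monom 1 i :: real poly"
  let ?x = "\<lambda>t j. x0 j + (if j = i then t else 0)"
  define C where "C = (\<Sum>j\<in>{..<d} - {i}. x0 j ^ p)"
  have norm_x: "pnorm_pow d p (?x t) = (x0 i + t) ^ p + C" for t
  proof -
    have "pnorm_pow d p (?x t) = (x0 i + t) ^ p + (\<Sum>j\<in>{..<d} - {i}. ?x t j ^ p)"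
      using i by (simp add: pnorm_pow_even[OF ev] sum.remove[of _ i])
    also have "(\<Sum>j\<in>{..<d} - {i}. ?x t j ^ p) = C"
      unfolding C_def by (intro sum.cong) auto
    finally show ?thesis .
  qed
  define g where
    "g t = hankel_functional h (1 * (?P + smult t ?M) ^ p) - mu * ((x0 i + t) ^ p + C)" for t
  have "0 \<le> g t" for t
    using bound[of "?x t"]
    by (simp add: g_def norm_x tensor_form_hankel poly_of_vec_add_unit[OF i])
  moreover have "g 0 = 0"
    using norm_x[of 0] norm min by (simp add: g_def tensor_form_hankel)
  moreover have "((\<lambda>t. (x0 i + t) ^ p + C) has_real_derivative (of_nat p * x0 i ^ (p - 1))) (at 0)"
    by (auto intro!: derivative_eq_intros)
  then have "(g has_real_derivative of_nat p * hankel_functional h (1 * ?M * ?P ^ (p - 1))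
      - mu * (of_nat p * x0 i ^ (p - 1))) (at 0)"
    unfolding g_def[abs_def] by (intro DERIV_diff DERIV_cmult hankel_functional_power_deriv)
  ultimately have "of_nat p * hankel_functional h (1 * ?M * ?P ^ (p - 1))
      - mu * (of_nat p * x0 i ^ (p - 1)) = 0"
    by (intro DERIV_local_min[of g _ 0 1]) auto
  then show ?thesis
    using p by (simp add: tensor_apply_hankel algebra_simps)
qed

lemma hankel_min_eigenvalue_exists:
  assumes ev: "even p" and p: "0 < p" and d: "0 < d"
  obtains mu where "is_H_eigenvalue p d (hankel_tensor h) mu"
    and "\<And>x. mu * pnorm_pow d p x \<le> tensor_form p d (hankel_tensor h) x"
proof -
  let ?F = "tensor_form p d (hankel_tensor h)"
  obtain x0 where x0: "x0 \<in> pnorm_sphere p d" and min: "\<forall>y\<in>pnorm_sphere p d. ?F x0 \<le> ?F y"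
    using continuous_attains_inf[OF compact_pnorm_sphere[OF p] _
        continuous_on_subset[OF continuous_on_tensor_form subset_UNIV]]
      unit_vector_in_pnorm_sphere[OF p d] by blast
  have bound: "?F x0 * pnorm_pow d p x \<le> ?F x" for x
    using tensor_form_ge_sphere_minimum[OF p x0 min] .
  have norm: "pnorm_pow d p x0 = 1"
    using x0 by (simp add: pnorm_sphere_def)
  then have "nonzero_vec d x0"
    using pnorm_pow_eq_0_iff[OF p, of d x0] by simp
  then have "is_H_eigenvalue p d (hankel_tensor h) (?F x0)"
    unfolding is_H_eigenvalue_def nonzero_vec_def
    using hankel_minimiser_is_eigenvector[OF ev p _ bound norm refl] by blast
  then show ?thesis
    using that bound by blast
qed

lemma tensor_form_H_eigenvector:
  assumes "even p" "0 < p" "\<forall>i<d. tensor_apply p d T x i = lam * x i ^ (p - 1)"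
  shows "tensor_form p d T x = lam * pnorm_pow d p x"
proof -
  have "tensor_form p d T x = (\<Sum>i<d. x i * (lam * x i ^ (p - 1)))"
    using assms by (simp add: tensor_form_eq_sum_tensor_apply)
  also have "\<dots> = lam * pnorm_pow d p x"
    unfolding pnorm_pow_even[OF assms(1)] sum_distrib_left
    by (intro sum.cong) (use assms(2) in \<open>auto simp: power_eq_if mult_ac\<close>)
  finally show ?thesis .
qed

lemma H_eigenvalue_ge_Rayleigh_bound:
  assumes "even p" "0 < p"
    and bound: "\<And>x. mu * pnorm_pow d p x \<le> tensor_form p d T x"
    and "is_H_eigenvalue p d T lam"
  shows "mu \<le> lam"
proof -
  obtain x where x: "nonzero_vec d x" and eig: "\<forall>i<d. tensor_apply p d T x i = lam * x i ^ (p - 1)"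
    using assms(4) unfolding is_H_eigenvalue_def nonzero_vec_def by blast
  have "mu * pnorm_pow d p x \<le> lam * pnorm_pow d p x"
    using bound[of x] tensor_form_H_eigenvector[OF assms(1,2) eig] by simp
  then show ?thesis
    using pnorm_pow_pos[OF x] by simp
qed

lemma lambda_min_hankel:
  assumes "even p" "0 < p" "0 < d"
  shows "is_H_eigenvalue p d (hankel_tensor h) (lambda_min p d (hankel_tensor h))"
    and "lambda_min p d (hankel_tensor h) * pnorm_pow d p x \<le> tensor_form p d (hankel_tensor h) x"
proof -
  obtain mu where eig: "is_H_eigenvalue p d (hankel_tensor h) mu"
    and bound: "\<And>x. mu * pnorm_pow d p x \<le> tensor_form p d (hankel_tensor h) x"
    using hankel_min_eigenvalue_exists[OF assms] by blast
  have "lambda_min p d (hankel_tensor h) = mu"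
    unfolding lambda_min_def
    by (rule cInf_eq_minimum) (use eig H_eigenvalue_ge_Rayleigh_bound[OF assms(1,2) bound] in auto)
  then show "is_H_eigenvalue p d (hankel_tensor h) (lambda_min p d (hankel_tensor h))"
    and "lambda_min p d (hankel_tensor h) * pnorm_pow d p x \<le> tensor_form p d (hankel_tensor h) x"
    using eig bound by simp_all
qed

lemma psd_hankel_iff_lambda_min_nonneg:
  assumes "even p" "0 < p" "0 < d"
  shows "psd_tensor p d (hankel_tensor h) \<longleftrightarrow> 0 \<le> lambda_min p d (hankel_tensor h)"
proof
  let ?lam = "lambda_min p d (hankel_tensor h)"
  assume "psd_tensor p d (hankel_tensor h)"
  obtain x where x: "nonzero_vec d x"
    and eig: "\<forall>i<d. tensor_apply p d (hankel_tensor h) x i = ?lam * x i ^ (p - 1)"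
    using lambda_min_hankel(1)[OF assms] unfolding is_H_eigenvalue_def nonzero_vec_def by blast
  have "0 \<le> ?lam * pnorm_pow d p x"
    using \<open>psd_tensor p d (hankel_tensor h)\<close> tensor_form_H_eigenvector[OF assms(1,2) eig]
    unfolding psd_tensor_def by metis
  then show "0 \<le> ?lam"
    using pnorm_pow_pos[OF x, of p] by (simp add: zero_le_mult_iff)
next
  assume "0 \<le> lambda_min p d (hankel_tensor h)"
  then show "psd_tensor p d (hankel_tensor h)"
    unfolding psd_tensor_def
    using lambda_min_hankel(2)[OF assms] pnorm_pow_nonneg by (meson order_trans zero_le_mult_iff)
qed

lemma tensor_form_hankel_uminus:
  "tensor_form p d (hankel_tensor (\<lambda>s. - h s)) x = - tensor_form p d (hankel_tensor h) x"
  by (simp add: tensor_form_def hankel_tensor_def sum_negf)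

lemma is_H_eigenvalue_hankel_uminus:
  "is_H_eigenvalue p d (hankel_tensor (\<lambda>s. - h s)) lam \<longleftrightarrow>
     is_H_eigenvalue p d (hankel_tensor h) (- lam)"
proof -
  have "tensor_apply p d (hankel_tensor (\<lambda>s. - h s)) x i = - tensor_apply p d (hankel_tensor h) x i"
    for x i
    by (simp add: tensor_apply_def hankel_tensor_def sum_negf)
  then show ?thesis
    unfolding is_H_eigenvalue_def by (intro ex_cong1 conj_cong refl all_cong1 imp_cong) auto
qed

lemma nsd_hankel_iff_psd_uminus:
  "nsd_tensor p d (hankel_tensor h) \<longleftrightarrow> psd_tensor p d (hankel_tensor (\<lambda>s. - h s))"
  by (simp add: nsd_tensor_def psd_tensor_def tensor_form_hankel_uminus)

lemma lambda_max_hankel: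
  assumes "even p" "0 < p" "0 < d"
  shows "lambda_max p d (hankel_tensor h) = - lambda_min p d (hankel_tensor (\<lambda>s. - h s))"
  unfolding lambda_max_def
proof (rule cSup_eq_maximum)
  let ?mu = "lambda_min p d (hankel_tensor (\<lambda>s. - h s))"
  show "- ?mu \<in> {lam. is_H_eigenvalue p d (hankel_tensor h) lam}"
    using lambda_min_hankel(1)[OF assms, of "\<lambda>s. - h s"]
    by (simp add: is_H_eigenvalue_hankel_uminus)
  fix lam
  assume "lam \<in> {lam. is_H_eigenvalue p d (hankel_tensor h) lam}"
  then have "?mu \<le> - lam"
    by (intro H_eigenvalue_ge_Rayleigh_bound[OF assms(1,2) lambda_min_hankel(2)[OF assms]])
      (simp add: is_H_eigenvalue_hankel_uminus)
  then show "lam \<le> - ?mu" by simp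
qed

lemma abs_conv_pow_trunc_vec_le: "\<bar>conv_pow (trunc_vec k y) q j\<bar> \<le> (\<Sum>i<k. \<bar>y i\<bar>) ^ q"
proof (induction q arbitrary: j)
  case 0
  then show ?case by simp
next
  case (Suc q)
  let ?y = "trunc_vec k y" and ?S = "\<Sum>i<k. \<bar>y i\<bar>"
  have "\<bar>conv_pow ?y (Suc q) j\<bar> \<le> (\<Sum>i\<le>j. \<bar>?y i\<bar> * \<bar>conv_pow ?y q (j - i)\<bar>)"
    by (simp add: conv_def abs_mult order_trans[OF sum_abs])
  also have "\<dots> \<le> (\<Sum>i\<le>j. \<bar>?y i\<bar> * ?S ^ q)"
    by (intro sum_mono mult_left_mono Suc.IH) auto
  also have "\<dots> = (\<Sum>i\<in>{..j} \<inter> {..<k}. \<bar>y i\<bar>) * ?S ^ q"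
    unfolding sum_distrib_right
    by (intro sum.mono_neutral_cong_right) (auto simp: trunc_vec_def)
  also have "\<dots> \<le> ?S * ?S ^ q"
    by (intro mult_right_mono sum_mono2) auto
  finally show ?case by simp
qed

lemma conv_ratio_nonneg: "0 \<le> conv_ratio m q k y"
  by (simp add: conv_ratio_def pnorm_pow_nonneg)

lemma conv_ratio_bounded:
  assumes y: "nonzero_vec k y"
  shows "conv_ratio m q k y \<le> real (q * (k - 1) + 1) * real k ^ (q * m)"
proof -
  let ?S = "\<Sum>i<k. \<bar>y i\<bar>" and ?n = "q * (k - 1) + 1"
  have k: "0 < k"
    using y by (auto simp: nonzero_vec_def)
  define M where "M = Max ((\<lambda>i. \<bar>y i\<bar>) ` {..<k})"
  have "M \<in> (\<lambda>i. \<bar>y i\<bar>) ` {..<k}"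
    unfolding M_def using k by (intro Max_in) auto
  then obtain i0 where i0: "i0 < k" "M = \<bar>y i0\<bar>"
    by auto
  have "?S \<le> (\<Sum>i<k. M)"
    unfolding M_def by (intro sum_mono Max_ge) auto
  then have S: "?S \<le> real k * M"
    by simp
  have "pnorm_pow ?n m (conv_pow (trunc_vec k y) q) \<le> (\<Sum>j<?n. (?S ^ q) ^ m)"
    unfolding pnorm_pow_def by (intro sum_mono power_mono abs_conv_pow_trunc_vec_le) auto
  also have "\<dots> = real ?n * ?S ^ (q * m)"
    by (simp add: power_mult)
  also have "\<dots> \<le> real ?n * (real k * M) ^ (q * m)"
    by (intro mult_left_mono power_mono S sum_nonneg) auto
  also have "\<dots> = real ?n * real k ^ (q * m) * \<bar>y i0\<bar> ^ (q * m)"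
    by (simp add: power_mult_distrib i0)
  also have "\<dots> \<le> real ?n * real k ^ (q * m) * pnorm_pow k (q * m) y"
    unfolding pnorm_pow_def using i0 by (intro mult_left_mono member_le_sum) auto
  finally show ?thesis
    using pnorm_pow_pos[OF y] by (simp add: conv_ratio_def divide_le_eq)
qed

lemma c1_const_le_conv_ratio: "nonzero_vec k y \<Longrightarrow> c1_const m q k \<le> conv_ratio m q k y"
  unfolding c1_const_def
  by (rule cInf_lower) (auto intro!: bdd_belowI[where m = 0] simp: conv_ratio_nonneg)

lemma conv_ratio_le_c2_const: "nonzero_vec k y \<Longrightarrow> conv_ratio m q k y \<le> c2_const m q k"
  unfolding c2_const_def
  by (rule cSup_upper) (auto intro!: bdd_aboveI conv_ratio_bounded)

lemma c1_const_nonneg: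
  assumes "0 < k"
  shows "0 \<le> c1_const m q k"
proof -
  have "nonzero_vec k (\<lambda>_. 1)"
    using assms by (auto simp: nonzero_vec_def)
  then show ?thesis
    unfolding c1_const_def by (intro cInf_greatest) (auto simp: conv_ratio_nonneg)
qed

lemma hankel_lambda_min_conv_ratio:
  assumes m: "even m" "0 < m" and q: "0 < q" and k: "0 < k" and n: "n = q * (k - 1) + 1"
  obtains y where "nonzero_vec k y"
    and "conv_ratio m q k y * lambda_min m n (hankel_tensor h) \<le>
           lambda_min (q * m) k (hankel_tensor h)"
proof -
  let ?H = "hankel_tensor h"
  let ?lam_k = "lambda_min (q * m) k ?H" and ?lam_n = "lambda_min m n ?H"
  have qm: "even (q * m)" "0 < q * m"
    using m q by simp_all
  obtain y where y: "nonzero_vec k y"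
    and eig: "\<forall>i<k. tensor_apply (q * m) k ?H y i = ?lam_k * y i ^ (q * m - 1)"
    using lambda_min_hankel(1)[OF qm k] unfolding is_H_eigenvalue_def nonzero_vec_def by blast
  let ?z = "conv_pow (trunc_vec k y) q"
  have "conv_ratio m q k y * ?lam_n * pnorm_pow k (q * m) y = ?lam_n * pnorm_pow n m ?z"
    using pnorm_pow_pos[OF y, of "q * m"] n by (simp add: conv_ratio_def)
  also have "\<dots> \<le> tensor_form m n ?H ?z"
    using n by (intro lambda_min_hankel(2) m) simp
  also have "\<dots> = tensor_form (q * m) k ?H y"
    by (simp add: tensor_form_hankel_conv_pow[OF n])
  also have "\<dots> = ?lam_k * pnorm_pow k (q * m) y"
    by (rule tensor_form_H_eigenvector[OF qm eig])
  finally show ?thesis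
    using that y pnorm_pow_pos[OF y, of "q * m"] by simp
qed

lemma psd_hankel_conv_power:
  assumes "n = q * (k - 1) + 1" and "psd_tensor m n (hankel_tensor h)"
  shows "psd_tensor (q * m) k (hankel_tensor h)"
  using assms by (simp add: psd_tensor_def tensor_form_hankel_conv_pow)

lemma hankel_lambda_min_bounds:
  assumes m: "even m" "0 < m" and q: "0 < q" and k: "0 < k" and n: "n = q * (k - 1) + 1"
  shows "psd_tensor (q * m) k (hankel_tensor h) \<Longrightarrow>
           c1_const m q k * lambda_min m n (hankel_tensor h) \<le> lambda_min (q * m) k (hankel_tensor h)"
    and "\<not> psd_tensor (q * m) k (hankel_tensor h) \<Longrightarrow>
           c2_const m q k * lambda_min m n (hankel_tensor h) \<le> lambda_min (q * m) k (hankel_tensor h)"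
proof -
  let ?H = "hankel_tensor h"
  let ?lam_k = "lambda_min (q * m) k ?H" and ?lam_n = "lambda_min m n ?H"
  obtain y where y: "nonzero_vec k y" and ratio: "conv_ratio m q k y * ?lam_n \<le> ?lam_k"
    using hankel_lambda_min_conv_ratio[OF assms] by blast
  have qm: "even (q * m)" "0 < q * m"
    using m q by simp_all
  show "c1_const m q k * ?lam_n \<le> ?lam_k" if psd: "psd_tensor (q * m) k ?H"
  proof (cases "0 \<le> ?lam_n")
    case True
    then have "c1_const m q k * ?lam_n \<le> conv_ratio m q k y * ?lam_n"
      by (intro mult_right_mono c1_const_le_conv_ratio y)
    with ratio show ?thesis by simp
  next
    case False
    then have "c1_const m q k * ?lam_n \<le> 0"
      by (intro mult_nonneg_nonpos c1_const_nonneg k) simp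
    also have "0 \<le> ?lam_k"
      using psd psd_hankel_iff_lambda_min_nonneg[OF qm k] by simp
    finally show ?thesis .
  qed
  show "c2_const m q k * ?lam_n \<le> ?lam_k" if not_psd: "\<not> psd_tensor (q * m) k ?H"
  proof -
    have "\<not> psd_tensor m n ?H"
      using not_psd psd_hankel_conv_power[OF n] by blast
    then have "?lam_n < 0"
      using psd_hankel_iff_lambda_min_nonneg[OF m] n by simp
    then have "c2_const m q k * ?lam_n \<le> conv_ratio m q k y * ?lam_n"
      by (intro mult_right_mono_neg conv_ratio_le_c2_const y) simp
    with ratio show ?thesis by simp
  qed
qed

theorem theorem2:
  fixes m q k n :: nat and h :: "nat \<Rightarrow> real"
  assumes "even m" and "m > 0" and "q > 0" and "k > 0"
    and "n = q * (k - 1) + 1"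
  shows "(psd_tensor (q * m) k (hankel_tensor h) \<longrightarrow>
            lambda_min (q * m) k (hankel_tensor h) \<ge> c1_const m q k * lambda_min m n (hankel_tensor h))
       \<and> (\<not> psd_tensor (q * m) k (hankel_tensor h) \<longrightarrow>
            lambda_min (q * m) k (hankel_tensor h) \<ge> c2_const m q k * lambda_min m n (hankel_tensor h))
       \<and> (nsd_tensor (q * m) k (hankel_tensor h) \<longrightarrow>
            lambda_max (q * m) k (hankel_tensor h) \<le> c1_const m q k * lambda_max m n (hankel_tensor h))
       \<and> (\<not> nsd_tensor (q * m) k (hankel_tensor h) \<longrightarrow>
            lambda_max (q * m) k (hankel_tensor h) \<le> c2_const m q k * lambda_max m n (hankel_tensor h))"
proof -
  let ?neg_h = "\<lambda>s. - h s"
  have "lambda_max (q * m) k (hankel_tensor h) = - lambda_min (q * m) k (hankel_tensor ?neg_h)"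
    using assms by (intro lambda_max_hankel) simp_all
  moreover have "lambda_max m n (hankel_tensor h) = - lambda_min m n (hankel_tensor ?neg_h)"
    using assms by (intro lambda_max_hankel) simp_all
  ultimately show ?thesis
    using hankel_lambda_min_bounds[OF assms, of h] hankel_lambda_min_bounds[OF assms, of ?neg_h]
    by (simp add: nsd_hankel_iff_psd_uminus)
qed

end
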